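(* For every term $\xi\in\Lambda$: if $\xi\Vdash\top,\bot\to\bot$ and $\xi\Vdash\bot,\top\to\bot$, then $\xi\Vdash\top,\top\to\bot$. Consequently, $\lambda x(x)I\,I\Vdash\neg\forall x^{\beth 2}(x\neq0,x\neq1\to\bot)$ and $W\Vdash\forall x^{\beth 2}(\forall y^{\beth 2}(y\neq0,y\neq x\to y\not\le x),x\neq0\to\bot)$.
   Context: Fix an integer $N\ge 0$. The set $\Lambda$ of terms is the smallest set containing the constants $B,C,I,K,W,cc,A$ and $p,q_0,\dots,q_N$, closed under application $(\xi)\eta$ (written $\xi\eta$), and containing, for each sequence $(\xi_i)_{i\in\mathbb N}$ of closed terms (no occurrence of $p,q_0,\dots,q_N$), a constant $\bigwedge_i\xi_i$ (injectively, well-founded). Stacks: finite sequences $t_0\cdot\ldots\cdot t_{n-1}\cdot\pi_0$ of terms, $\pi_0$ the empty stack; $\Pi$ the set of stacks. $\ell_t=((C)(B)CB)t$, $k_{\pi_0}=A$, $k_{t\cdot\pi}=(\ell_t)k_\pi$; $\sigma=(BW)(C)(B)BB$, $\underline0=(K)I$, $\underline{n+1}=(\sigma)\underline n$. Execution $\succ$: least preorder on $\Lambda\times\Pi$ with $(\xi)\eta\star\pi\succ\xi\star\eta\cdot\pi$; $B\star\xi\cdot\eta\cdot\zeta\cdot\pi\succ\xi\star(\eta)\zeta\cdot\pi$; $C\star\xi\cdot\eta\cdot\zeta\cdot\pi\succ\xi\star\zeta\cdot\eta\cdot\pi$; $I\star\xi\cdot\pi\succ\xi\star\pi$; $K\star\xi\cdot\eta\cdot\pi\succ\xi\star\pi$;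 $W\star\xi\cdot\eta\cdot\pi\succ\xi\star\eta\cdot\eta\cdot\pi$; $cc\star\xi\cdot\pi\succ\xi\star k_\pi\cdot\pi$; $A\star\xi\cdot\pi\succ\xi\star\pi_0$; $\bigwedge_i\xi_i\star\underline n\cdot\pi\succ\xi_n\star\pi$. Pole $\perp\!\!\!\perp=\{\xi\star\pi:\exists\varpi,\ \xi\star\pi\succ p\star\varpi\}$. $\lambda$-terms are translated into terms by the usual combinatory translation. Realizability (Krivine): $\xi\Vdash F$ iff $\xi\star\pi\in\perp\!\!\!\perp$ for all $\pi\in\|F\|$, with $\|\bot\|=\Pi$, $\|\top\|=\emptyset$, $\|A\to B\|=\{\eta\cdot\pi:\eta\Vdash A,\pi\in\|B\|\}$, $A_1,A_2\to B$ means $A_1\to(A_2\to B)$, $\neg A$ means $A\to\bot$, $\|\forall x F[x]\|=\bigcup_a\|F[a]\|$. $\beth2$ is the characteristic Boolean algebra of the realizability model, with underlying set $\{0,1\}$ (ordered by $0\le1$); the relativized quantifier satisfies $\|\forall x^{\beth 2}F[x]\|=\|F[0]\|\cup\|F[1]\|$, and for $a,b\in\{0,1\}$ the atomic formulas $a\neq b$, $a\not\le b$ are interpreted as $\top$ when true and $\bot$ when false. *)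

theory Defs
  imports Main
begin

text \<open>Raw terms. The set Lambda of the paper is carved out by wf_term N below:
  q_i only for i <= N, and the constant Wedge f only for sequences f of closed terms.\<close>
datatype trm =
    cB | cC | cI | cK | cW | cc | cA
  | cp
  | cq nat
  | App trm trm
  | Wedge "nat \<Rightarrow> trm"

primrec closed :: "trm \<Rightarrow> bool" where
  "closed cB = True" | "closed cC = True" | "closed cI = True" | "closed cK = True"
| "closed cW = True" | "closed cc = True" | "closed cA = True"
| "closed cp = False"
| "closed (cq i) = False"
| "closed (App s t) = (closed s \<and> closed t)"
| "closed (Wedge f) = (\<forall>i. closed (f i))"

primrec wf_term :: "nat \<Rightarrow> trm \<Rightarrow> bool" where
  "wf_term N cB = True" | "wf_term N cC = True" | "wf_term N cI = True" | "wf_term N cK = True"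
| "wf_term N cW = True" | "wf_term N cc = True" | "wf_term N cA = True"
| "wf_term N cp = True"
| "wf_term N (cq i) = (i \<le> N)"
| "wf_term N (App s t) = (wf_term N s \<and> wf_term N t)"
| "wf_term N (Wedge f) = (\<forall>i. closed (f i))"

type_synonym stack = "trm list"

definition wf_stack :: "nat \<Rightarrow> stack \<Rightarrow> bool" where
  "wf_stack N \<pi> = (\<forall>t\<in>set \<pi>. wf_term N t)"

definition ell :: "trm \<Rightarrow> trm" where
  "ell t = App (App cC (App (App cB cC) cB)) t"

primrec kont :: "stack \<Rightarrow> trm" where
  "kont [] = cA"
| "kont (t # \<pi>) = App (ell t) (kont \<pi>)"

definition sigma :: trm where
  "sigma = App (App cB cW) (App cC (App (App cB cB) cB))"

primrec numeral_trm :: "nat \<Rightarrow> trm" where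
  "numeral_trm 0 = App cK cI"
| "numeral_trm (Suc n) = App sigma (numeral_trm n)"

inductive step :: "trm \<times> stack \<Rightarrow> trm \<times> stack \<Rightarrow> bool" where
  push: "step (App s t, \<pi>) (s, t # \<pi>)"
| rB: "step (cB, x # y # z # \<pi>) (x, App y z # \<pi>)"
| rC: "step (cC, x # y # z # \<pi>) (x, z # y # \<pi>)"
| rI: "step (cI, x # \<pi>) (x, \<pi>)"
| rK: "step (cK, x # y # \<pi>) (x, \<pi>)"
| rW: "step (cW, x # y # \<pi>) (x, y # y # \<pi>)"
| rcc: "step (cc, x # \<pi>) (x, kont \<pi> # \<pi>)"
| rA: "step (cA, x # \<pi>) (x, [])"
| rWedge: "step (Wedge f, numeral_trm n # \<pi>) (f n, \<pi>)"

definition exec :: "trm \<times> stack \<Rightarrow> trm \<times> stack \<Rightarrow> bool" where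
  "exec = step\<^sup>*\<^sup>*"

definition pole :: "(trm \<times> stack) set" where
  "pole = {(\<xi>, \<pi>). \<exists>\<omega>. exec (\<xi>, \<pi>) (cp, \<omega>)}"

text \<open>Elements of beth2 = {0,1} are represented by bool (False = 0, True = 1),
  ordered by False \<le> True.\<close>
datatype form =
    FBot | FTop
  | Imp form form
  | ForallB "bool \<Rightarrow> form"
  | Neq bool bool
  | NotLe bool bool

definition Neg :: "form \<Rightarrow> form" where
  "Neg F = Imp F FBot"

primrec fval :: "nat \<Rightarrow> form \<Rightarrow> stack set" where
  "fval N FBot = {\<pi>. wf_stack N \<pi>}"
| "fval N FTop = {}"
| "fval N (Imp F G) =
     {\<eta> # \<pi> | \<eta> \<pi>. wf_term N \<eta> \<and> (\<forall>\<rho>\<in>fval N F. (\<eta>, \<rho>) \<in> pole) \<and> \<pi> \<in> fval N G}"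
| "fval N (ForallB F) = fval N (F False) \<union> fval N (F True)"
| "fval N (Neq a b) = (if a \<noteq> b then {} else {\<pi>. wf_stack N \<pi>})"
| "fval N (NotLe a b) = (if \<not> (a \<le> b) then {} else {\<pi>. wf_stack N \<pi>})"

definition realizes :: "nat \<Rightarrow> trm \<Rightarrow> form \<Rightarrow> bool" where
  "realizes N \<xi> F = (\<forall>\<pi>\<in>fval N F. (\<xi>, \<pi>) \<in> pole)"

text \<open>Combinatory translation of \<lambda>x (x)I I:
  \<lambda>x x = I; \<lambda>x (t)u = ((C)(\<lambda>x t))u when x not in u.
  So \<lambda>x (x)I = ((C)I)I and \<lambda>x ((x)I)I = ((C)((C)I)I)I.\<close>
definition lamxII :: trm where
  "lamxII = App (App cC (App (App cC cI) cI)) cI"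

end

theory Submission
  imports Defs
begin

text \<open>Until one of the two arguments \<eta>, \<eta>' reaches head position, the execution of
  \<xi> \<star> \<eta>\<cdot>\<eta>'\<cdot>\<pi> does not depend on them, so it can be run symbolically with two holes in
  their place. Filling the holes with q0 and p: since q0 has no reduction rule, reaching p
  forces the symbolic run to reach p or the second hole; with p and q0 it reaches p or the
  first hole. Execution is deterministic and stops at either event, so both runs end in
  the same state, which must be p itself; hence \<xi> \<star> \<eta>\<cdot>\<eta>'\<cdot>\<pi> reaches p for all \<eta>, \<eta>'.\<close>

lemma deterministic_rtranclp_comparable:
  assumes det: "\<And>u v w. r u v \<Longrightarrow> r u w \<Longrightarrow> v = w"
  shows "r\<^sup>*\<^sup>* x y \<Longrightarrow> r\<^sup>*\<^sup>* x z \<Longrightarrow> r\<^sup>*\<^sup>* y z \<or> r\<^sup>*\<^sup>* z y"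
proof (induction arbitrary: z rule: converse_rtranclp_induct)
  case base
  then show ?case by simp
next
  case (step x x1)
  show ?case
  proof (cases "z = x")
    case True
    then show ?thesis using step(1,2) by (meson converse_rtranclp_into_rtranclp)
  next
    case False
    then obtain z1 where "r x z1" "r\<^sup>*\<^sup>* z1 z" using step(4) by (metis converse_rtranclpE)
    with det step(1,3) show ?thesis by blast
  qed
qed

lemma numeral_trm_inj: "numeral_trm m = numeral_trm n \<Longrightarrow> m = n"
  by (induction m arbitrary: n) (case_tac n; auto simp: sigma_def)+

lemma closed_numeral_trm: "closed (numeral_trm n)"
  by (induction n) (auto simp: sigma_def)

lemma step_deterministic: "step s t \<Longrightarrow> step s u \<Longrightarrow> t = u"
  by (induction rule: step.induct) (auto elim: step.cases dest: numeral_trm_inj)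

lemma cq_no_step: "\<not> step (cq i, \<pi>) s"
  by (auto elim: step.cases)

lemma pole_cp: "(cp, \<pi>) \<in> pole"
  by (auto simp: pole_def exec_def)

lemma pole_exec: "exec s s' \<Longrightarrow> s' \<in> pole \<Longrightarrow> s \<in> pole"
  by (auto simp: pole_def exec_def intro: rtranclp_trans)

lemma pole_step: "step s s' \<Longrightarrow> s' \<in> pole \<Longrightarrow> s \<in> pole"
  by (metis exec_def pole_exec r_into_rtranclp)

datatype hterm = Term trm | HApp hterm hterm | Hole1 | Hole2

primrec fill :: "trm \<Rightarrow> trm \<Rightarrow> hterm \<Rightarrow> trm" where
  "fill a b (Term t) = t"
| "fill a b (HApp x y) = App (fill a b x) (fill a b y)"
| "fill a b Hole1 = a"
| "fill a b Hole2 = b"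

primrec hole_free :: "hterm \<Rightarrow> bool" where
  "hole_free (Term t) = True"
| "hole_free (HApp x y) = (hole_free x \<and> hole_free y)"
| "hole_free Hole1 = False"
| "hole_free Hole2 = False"

fun fill_proc :: "trm \<Rightarrow> trm \<Rightarrow> hterm \<times> hterm list \<Rightarrow> trm \<times> stack" where
  "fill_proc a b (h, \<pi>) = (fill a b h, map (fill a b) \<pi>)"

primrec hkont :: "hterm list \<Rightarrow> hterm" where
  "hkont [] = Term cA"
| "hkont (t # \<pi>) = HApp (HApp (Term (App cC (App (App cB cC) cB))) t) (hkont \<pi>)"

lemma fill_hkont: "fill a b (hkont \<pi>) = kont (map (fill a b) \<pi>)"
  by (induction \<pi>) (auto simp: ell_def)

lemma hole_free_fill: "hole_free x \<Longrightarrow> fill a b x = fill a' b' x"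
  by (induction x) auto

lemma fill_not_closed: "\<not> closed a \<Longrightarrow> \<not> closed b \<Longrightarrow> \<not> hole_free x \<Longrightarrow> \<not> closed (fill a b x)"
  by (induction x) auto

text \<open>A hole never enters head position: the run stops there. In the rule for Wedge the
  argument must be hole free, so the filling used to read off the numeral is irrelevant.\<close>
inductive hstep :: "hterm \<times> hterm list \<Rightarrow> hterm \<times> hterm list \<Rightarrow> bool" where
  hpush: "hstep (HApp x y, \<pi>) (x, y # \<pi>)"
| push: "hstep (Term (App s t), \<pi>) (Term s, Term t # \<pi>)"
| rB: "hstep (Term cB, x # y # z # \<pi>) (x, HApp y z # \<pi>)"
| rC: "hstep (Term cC, x # y # z # \<pi>) (x, z # y # \<pi>)"
| rI: "hstep (Term cI, x # \<pi>) (x, \<pi>)"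
| rK: "hstep (Term cK, x # y # \<pi>) (x, \<pi>)"
| rW: "hstep (Term cW, x # y # \<pi>) (x, y # y # \<pi>)"
| rcc: "hstep (Term cc, x # \<pi>) (x, hkont \<pi> # \<pi>)"
| rA: "hstep (Term cA, x # \<pi>) (x, [])"
| rWedge: "hole_free x \<Longrightarrow> fill cA cA x = numeral_trm n \<Longrightarrow>
    hstep (Term (Wedge f), x # \<pi>) (Term (f n), \<pi>)"

lemma hstep_fill: "hstep X Y \<Longrightarrow> step (fill_proc a b X) (fill_proc a b Y)"
proof (induction rule: hstep.induct)
  case (rWedge x n f \<pi>)
  then have "fill a b x = numeral_trm n" using hole_free_fill by metis
  then show ?case using step.rWedge[of f n "map (fill a b) \<pi>"] by simp
qed (auto intro: step.intros simp: fill_hkont)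

lemma hstep_star_fill: "hstep\<^sup>*\<^sup>* X Y \<Longrightarrow> exec (fill_proc a b X) (fill_proc a b Y)"
  unfolding exec_def
  by (induction rule: rtranclp_induct) (auto intro: rtranclp.rtrancl_into_rtrancl hstep_fill)

lemma hstep_deterministic: "hstep s t \<Longrightarrow> hstep s u \<Longrightarrow> t = u"
proof (induction rule: hstep.induct)
  case (rWedge x n f \<pi>)
  from rWedge(3) show ?case by cases (use rWedge(2) numeral_trm_inj in metis)+
qed (auto elim: hstep.cases)

lemma hstep_head: "hstep X Y \<Longrightarrow> fst X \<noteq> Term cp \<and> fst X \<noteq> Hole1 \<and> fst X \<noteq> Hole2"
  by (induction rule: hstep.induct) auto

text \<open>Non-closed fillings cannot be mistaken for a numeral, which is closed.\<close>
lemma hstep_progress_Term: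
  assumes "step (t, map (fill a b) \<pi>) s'" and "\<not> closed a" and "\<not> closed b"
  shows "\<exists>Y. hstep (Term t, \<pi>) Y"
  using assms(1)
proof cases
  case (rWedge f n \<pi>')
  then obtain x r where x: "\<pi> = x # r" "fill a b x = numeral_trm n"
    by (auto simp: Cons_eq_map_conv)
  then have "hole_free x"
    using fill_not_closed[OF assms(2,3)] closed_numeral_trm by metis
  moreover from this have "fill cA cA x = numeral_trm n" using x(2) hole_free_fill by metis
  ultimately show ?thesis using x rWedge by (auto intro: hstep.rWedge)
qed (auto simp: Cons_eq_map_conv intro: hstep.intros)

lemma hstep_progress:
  assumes "step (fill_proc a b X) s'" and "\<not> closed a" and "\<not> closed b"
    and "fst X \<noteq> Hole1" and "fst X \<noteq> Hole2"
  shows "\<exists>Y. hstep X Y"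
proof -
  obtain h \<pi> where X: "X = (h, \<pi>)" by force
  show ?thesis
  proof (cases h)
    case (Term t)
    then show ?thesis using hstep_progress_Term assms X by auto
  next
    case (HApp x y)
    then show ?thesis using X hstep.hpush by blast
  qed (use assms X in auto)
qed

lemma exec_fill_hstep_to_p:
  assumes "exec s (cp, \<omega>)" and "s = fill_proc a b X"
    and a: "a = cq i \<or> a = cp" and b: "b = cq j \<or> b = cp"
  shows "\<exists>X'. hstep\<^sup>*\<^sup>* X X' \<and>
    (fst X' = Term cp \<or> fst X' = Hole1 \<and> a = cp \<or> fst X' = Hole2 \<and> b = cp)"
  using assms(1,2) unfolding exec_def
proof (induction arbitrary: X rule: converse_rtranclp_induct)
  case base
  then show ?case by (cases X; cases "fst X") auto
next
  case (step s s1)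
  have filling_stuck_or_p: "c = cp" if "step (c, \<rho>) s'" "c = cq k \<or> c = cp" for c \<rho> s' k
    using that cq_no_step by blast
  obtain h \<pi> where X: "X = (h, \<pi>)" by force
  consider "h = Hole1" | "h = Hole2" | "h \<noteq> Hole1" "h \<noteq> Hole2" by blast
  then show ?case
  proof cases
    case 1
    then have "a = cp" using step(1,4) X filling_stuck_or_p[OF _ a] by simp
    with 1 X show ?thesis by auto
  next
    case 2
    then have "b = cp" using step(1,4) X filling_stuck_or_p[OF _ b] by simp
    with 2 X show ?thesis by auto
  next
    case 3
    moreover have "\<not> closed a" "\<not> closed b" using a b by auto
    ultimately obtain Y where Y: "hstep X Y" using hstep_progress step(1,4) X by fastforce
    then have "s1 = fill_proc a b Y" using hstep_fill step(1,4) step_deterministic by metis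
    then obtain X' where "hstep\<^sup>*\<^sup>* Y X'" and "fst X' = Term cp \<or> fst X' = Hole1 \<and> a = cp \<or> fst X' = Hole2 \<and> b = cp"
      using step(3) by blast
    with Y show ?thesis by (meson converse_rtranclp_into_rtranclp)
  qed
qed

lemma pole_any_args_if_pole_cq_cp:
  assumes "(\<xi>, cq i # cp # \<pi>) \<in> pole" and "(\<xi>, cp # cq i # \<pi>) \<in> pole"
  shows "(\<xi>, \<eta> # \<eta>' # \<pi>) \<in> pole"
proof -
  define X where "X = (Term \<xi>, Hole1 # Hole2 # map Term \<pi>)"
  have fill_X: "fill_proc a b X = (\<xi>, a # b # \<pi>)" for a b
    by (simp add: X_def comp_def)
  obtain X1 where X1: "hstep\<^sup>*\<^sup>* X X1" "fst X1 = Term cp \<or> fst X1 = Hole2"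
    using assms(1) exec_fill_hstep_to_p[of _ _ "cq i" cp X] fill_X by (fastforce simp: pole_def)
  obtain X2 where X2: "hstep\<^sup>*\<^sup>* X X2" "fst X2 = Term cp \<or> fst X2 = Hole1"
    using assms(2) exec_fill_hstep_to_p[of _ _ cp "cq i" X] fill_X by (fastforce simp: pole_def)
  have "hstep\<^sup>*\<^sup>* X1 X2 \<or> hstep\<^sup>*\<^sup>* X2 X1"
    using deterministic_rtranclp_comparable hstep_deterministic X1(1) X2(1) by metis
  then have "X1 = X2"
    using X1(2) X2(2) by (metis converse_rtranclpE hstep_head)
  then obtain \<rho> where "X1 = (Term cp, \<rho>)"
    using X1(2) X2(2) by (cases X1) auto
  then have "exec (\<xi>, \<eta> # \<eta>' # \<pi>) (cp, map (fill \<eta> \<eta>') \<rho>)"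
    using hstep_star_fill[OF X1(1)] fill_X by simp
  then show ?thesis using pole_exec pole_cp by blast
qed

lemma realizes_top_top_bot:
  assumes "realizes N \<xi> (Imp FTop (Imp FBot FBot))"
    and "realizes N \<xi> (Imp FBot (Imp FTop FBot))"
  shows "realizes N \<xi> (Imp FTop (Imp FTop FBot))"
  unfolding realizes_def
proof (clarsimp)
  fix \<eta> \<eta>' \<pi> assume "wf_stack N \<pi>"
  with assms pole_cp have "(\<xi>, cq 0 # cp # \<pi>) \<in> pole" "(\<xi>, cp # cq 0 # \<pi>) \<in> pole"
    unfolding realizes_def by auto
  then show "(\<xi>, \<eta> # \<eta>' # \<pi>) \<in> pole" by (rule pole_any_args_if_pole_cq_cp)
qed

lemma exec_lamxII: "exec (lamxII, \<eta> # \<pi>) (\<eta>, cI # cI # \<pi>)"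
  unfolding exec_def lamxII_def
  by (rule converse_rtranclp_into_rtranclp, rule step.intros)+ (rule rtranclp.rtrancl_refl)

lemma realizes_lamxII:
  "realizes N lamxII (Neg (ForallB (\<lambda>x. Imp (Neq x False) (Imp (Neq x True) FBot))))"
  unfolding realizes_def Neg_def
proof
  fix \<pi> assume "\<pi> \<in> fval N (Imp (ForallB (\<lambda>x. Imp (Neq x False) (Imp (Neq x True) FBot))) FBot)"
  then obtain \<eta> \<rho> where \<pi>: "\<pi> = \<eta> # \<rho>" "wf_stack N \<rho>"
    and "realizes N \<eta> (Imp FBot (Imp FTop FBot))" "realizes N \<eta> (Imp FTop (Imp FBot FBot))"
    unfolding realizes_def by auto
  then have "realizes N \<eta> (Imp FTop (Imp FTop FBot))" using realizes_top_top_bot by blast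
  then have "(\<eta>, cI # cI # \<rho>) \<in> pole" using \<pi> unfolding realizes_def by auto
  then show "(lamxII, \<pi>) \<in> pole" using \<pi> exec_lamxII pole_exec by blast
qed

lemma realizes_cW:
  "realizes N cW (ForallB (\<lambda>x.
     Imp (ForallB (\<lambda>y. Imp (Neq y False) (Imp (Neq y x) (NotLe y x))))
         (Imp (Neq x False) FBot)))"
  unfolding realizes_def
proof
  fix \<pi> assume "\<pi> \<in> fval N (ForallB (\<lambda>x.
     Imp (ForallB (\<lambda>y. Imp (Neq y False) (Imp (Neq y x) (NotLe y x))))
         (Imp (Neq x False) FBot)))"
  then obtain \<eta> a \<rho> where \<pi>: "\<pi> = \<eta> # a # \<rho>" and "wf_term N a" "wf_stack N \<rho>"
    and "realizes N \<eta> (Imp FBot (Imp FBot FBot)) \<and> realizes N a FBot \<or>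
         realizes N \<eta> (Imp FBot (Imp FTop FBot)) \<and> realizes N \<eta> (Imp FTop (Imp FBot FBot))"
    unfolding realizes_def by auto
  then have "realizes N \<eta> (Imp FBot (Imp FBot FBot)) \<and> realizes N a FBot \<or>
      realizes N \<eta> (Imp FTop (Imp FTop FBot))"
    using realizes_top_top_bot by blast
  then have "(\<eta>, a # a # \<rho>) \<in> pole"
    using \<open>wf_term N a\<close> \<open>wf_stack N \<rho>\<close> unfolding realizes_def by auto
  then show "(cW, \<pi>) \<in> pole" using \<pi> pole_step step.rW by blast
qed

theorem corollary1:
  fixes N :: nat
  shows "(\<forall>\<xi>. wf_term N \<xi> \<longrightarrow>
            realizes N \<xi> (Imp FTop (Imp FBot FBot)) \<longrightarrow>
            realizes N \<xi> (Imp FBot (Imp FTop FBot)) \<longrightarrow>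
            realizes N \<xi> (Imp FTop (Imp FTop FBot)))
       \<and> realizes N lamxII (Neg (ForallB (\<lambda>x. Imp (Neq x False) (Imp (Neq x True) FBot))))
       \<and> realizes N cW (ForallB (\<lambda>x.
            Imp (ForallB (\<lambda>y. Imp (Neq y False) (Imp (Neq y x) (NotLe y x))))
                (Imp (Neq x False) FBot)))"
  using realizes_top_top_bot realizes_lamxII realizes_cW by blast

end
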